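(* Let $Q$ be a proper quasi-ideal of a finite-dimensional Lie algebra $L$ over a field $F$ which is modular* in $L$. Then $Q$ is a strong quasi-ideal of $L$; consequently either $Q$ is a strong ideal of $L$, or $L$ is almost abelian, or $F$ has characteristic two and there is an isomorphism $L\cong K$ carrying $Q$ onto $Fc$.
   Context: $K$ denotes the three-dimensional Lie algebra with basis $a,b,c$ and products $[a,b]=c$, $[b,c]=b$, $[a,c]=a$. $\langle U,B\rangle$ denotes the subalgebra generated by $U\cup B$. A subalgebra $Q$ is a quasi-ideal of $L$ if $[Q,V]\subseteq Q+V$ for every subspace $V$ of $L$. A subalgebra $U$ is modular* in $L$ if $\langle U,B\rangle\cap C=\langle B,U\cap C\rangle$ for all subalgebras $B\subseteq C$ of $L$, and $\langle U\cap B,C\rangle=\langle B,C\rangle\cap U$ for all subalgebras $B,C$ of $L$ with $C\subseteq U$. A subalgebra $U$ of $L$ is a strong ideal (respectively strong quasi-ideal) of $L$ if every one-dimensional subalgebra of $U$ is an ideal (respectively quasi-ideal) of $L$. $L$ is almost abelian if $L=L^2\oplus Fx$ for some $x$, where $L^2=[L,L]$ is abelian and $\mathrm{ad}\,x$ acts as the identity map on $L^2$. *)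

theory Defs
  imports Main "HOL.Vector_Spaces" "HOL-Library.Product_Plus"
begin

text \<open>A Lie algebra L over a field 'f is modelled as the whole carrier type 'v,
  with scalar multiplication scl and Lie bracket br.\<close>

definition lie_algebra :: "('f::field \<Rightarrow> 'v::ab_group_add \<Rightarrow> 'v) \<Rightarrow> ('v \<Rightarrow> 'v \<Rightarrow> 'v) \<Rightarrow> bool" where
  "lie_algebra scl br \<longleftrightarrow> Vector_Spaces.vector_space scl
     \<and> (\<forall>x y z. br (x + y) z = br x z + br y z)
     \<and> (\<forall>x y z. br x (y + z) = br x y + br x z)
     \<and> (\<forall>r x y. br (scl r x) y = scl r (br x y))
     \<and> (\<forall>r x y. br x (scl r y) = scl r (br x y))
     \<and> (\<forall>x. br x x = 0)
     \<and> (\<forall>x y z. br x (br y z) + br y (br z x) + br z (br x y) = 0)"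

definition fin_dim :: "('f::field \<Rightarrow> 'v::ab_group_add \<Rightarrow> 'v) \<Rightarrow> bool" where
  "fin_dim scl \<longleftrightarrow> (\<exists>B. finite B \<and> Modules.module.span scl B = UNIV)"

definition subalgebra :: "('f::field \<Rightarrow> 'v::ab_group_add \<Rightarrow> 'v) \<Rightarrow> ('v \<Rightarrow> 'v \<Rightarrow> 'v) \<Rightarrow> 'v set \<Rightarrow> bool" where
  "subalgebra scl br U \<longleftrightarrow> Modules.module.subspace scl U \<and> (\<forall>x\<in>U. \<forall>y\<in>U. br x y \<in> U)"

definition gen :: "('f::field \<Rightarrow> 'v::ab_group_add \<Rightarrow> 'v) \<Rightarrow> ('v \<Rightarrow> 'v \<Rightarrow> 'v) \<Rightarrow> 'v set \<Rightarrow> 'v set" where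
  "gen scl br S = \<Inter>{U. subalgebra scl br U \<and> S \<subseteq> U}"

definition brset :: "('f::field \<Rightarrow> 'v::ab_group_add \<Rightarrow> 'v) \<Rightarrow> ('v \<Rightarrow> 'v \<Rightarrow> 'v) \<Rightarrow> 'v set \<Rightarrow> 'v set \<Rightarrow> 'v set" where
  "brset scl br A B = Modules.module.span scl {br a b | a b. a \<in> A \<and> b \<in> B}"

definition setsum :: "'v::ab_group_add set \<Rightarrow> 'v set \<Rightarrow> 'v set" where
  "setsum A B = {a + b | a b. a \<in> A \<and> b \<in> B}"

definition quasi_ideal :: "('f::field \<Rightarrow> 'v::ab_group_add \<Rightarrow> 'v) \<Rightarrow> ('v \<Rightarrow> 'v \<Rightarrow> 'v) \<Rightarrow> 'v set \<Rightarrow> bool" where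
  "quasi_ideal scl br Q \<longleftrightarrow> subalgebra scl br Q \<and>
     (\<forall>V. Modules.module.subspace scl V \<longrightarrow> brset scl br Q V \<subseteq> setsum Q V)"

definition lie_ideal :: "('f::field \<Rightarrow> 'v::ab_group_add \<Rightarrow> 'v) \<Rightarrow> ('v \<Rightarrow> 'v \<Rightarrow> 'v) \<Rightarrow> 'v set \<Rightarrow> bool" where
  "lie_ideal scl br I \<longleftrightarrow> subalgebra scl br I \<and> brset scl br I UNIV \<subseteq> I"

definition modular_star :: "('f::field \<Rightarrow> 'v::ab_group_add \<Rightarrow> 'v) \<Rightarrow> ('v \<Rightarrow> 'v \<Rightarrow> 'v) \<Rightarrow> 'v set \<Rightarrow> bool" where
  "modular_star scl br U \<longleftrightarrow> subalgebra scl br U \<and>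
     (\<forall>B C. subalgebra scl br B \<and> subalgebra scl br C \<and> B \<subseteq> C \<longrightarrow>
        gen scl br (U \<union> B) \<inter> C = gen scl br (B \<union> (U \<inter> C))) \<and>
     (\<forall>B C. subalgebra scl br B \<and> subalgebra scl br C \<and> C \<subseteq> U \<longrightarrow>
        gen scl br ((U \<inter> B) \<union> C) = gen scl br (B \<union> C) \<inter> U)"

definition strong_ideal :: "('f::field \<Rightarrow> 'v::ab_group_add \<Rightarrow> 'v) \<Rightarrow> ('v \<Rightarrow> 'v \<Rightarrow> 'v) \<Rightarrow> 'v set \<Rightarrow> bool" where
  "strong_ideal scl br U \<longleftrightarrow> subalgebra scl br U \<and>
     (\<forall>S. subalgebra scl br S \<and> S \<subseteq> U \<and> Vector_Spaces.vector_space.dim scl S = 1 \<longrightarrow> lie_ideal scl br S)"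

definition strong_quasi_ideal :: "('f::field \<Rightarrow> 'v::ab_group_add \<Rightarrow> 'v) \<Rightarrow> ('v \<Rightarrow> 'v \<Rightarrow> 'v) \<Rightarrow> 'v set \<Rightarrow> bool" where
  "strong_quasi_ideal scl br U \<longleftrightarrow> subalgebra scl br U \<and>
     (\<forall>S. subalgebra scl br S \<and> S \<subseteq> U \<and> Vector_Spaces.vector_space.dim scl S = 1 \<longrightarrow> quasi_ideal scl br S)"

definition almost_abelian :: "('f::field \<Rightarrow> 'v::ab_group_add \<Rightarrow> 'v) \<Rightarrow> ('v \<Rightarrow> 'v \<Rightarrow> 'v) \<Rightarrow> bool" where
  "almost_abelian scl br \<longleftrightarrow> (let L2 = brset scl br UNIV UNIV in
     (\<forall>u\<in>L2. \<forall>v\<in>L2. br u v = 0) \<and>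
     (\<exists>x. L2 \<inter> Modules.module.span scl {x} = {0} \<and> setsum L2 (Modules.module.span scl {x}) = UNIV \<and>
          (\<forall>u\<in>L2. br x u = u)))"

text \<open>The Lie algebra K on 'f \<times> 'f \<times> 'f, coordinates w.r.t. the basis a, b, c:
  (x1,x2,x3) = x1 a + x2 b + x3 c, with [a,b]=c, [b,c]=b, [a,c]=a.\<close>
definition K_scale :: "'f::field \<Rightarrow> 'f \<times> 'f \<times> 'f \<Rightarrow> 'f \<times> 'f \<times> 'f" where
  "K_scale r x = (case x of (x1, x2, x3) \<Rightarrow> (r * x1, r * x2, r * x3))"

definition K_br :: "'f::field \<times> 'f \<times> 'f \<Rightarrow> 'f \<times> 'f \<times> 'f \<Rightarrow> 'f \<times> 'f \<times> 'f" where
  "K_br x y = (case x of (x1, x2, x3) \<Rightarrow> case y of (y1, y2, y3) \<Rightarrow>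
     (x1 * y3 - x3 * y1, x2 * y3 - x3 * y2, x1 * y2 - x2 * y1))"

definition lie_iso :: "('f::field \<Rightarrow> 'v::ab_group_add \<Rightarrow> 'v) \<Rightarrow> ('v \<Rightarrow> 'v \<Rightarrow> 'v) \<Rightarrow>
    ('f \<Rightarrow> 'w::ab_group_add \<Rightarrow> 'w) \<Rightarrow> ('w \<Rightarrow> 'w \<Rightarrow> 'w) \<Rightarrow> ('v \<Rightarrow> 'w) \<Rightarrow> bool" where
  "lie_iso scl br scl' br' \<phi> \<longleftrightarrow> bij \<phi> \<and> Vector_Spaces.linear scl scl' \<phi> \<and>
     (\<forall>x y. \<phi> (br x y) = br' (\<phi> x) (\<phi> y))"

end

theory Submission
  imports Defs
begin

(* Call x a quasi-line element if [x, y] lies in span {x, y} for every y, i.e. Fx is a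
   quasi-ideal.  First, modularity* turns the quasi-ideal condition [Q, Fy] <= Q + Fy into
   [q, y] in Fq + Fy for y outside Q (the modular law cuts Q + Fy down to Fq); a short
   linearity argument extends this to y inside Q.  So every element of Q is a quasi-line
   element, which gives the strong quasi-ideal property, and the strong ideal property
   whenever [q, y] always lies in Fq.  Otherwise some q in Q has [q, y] = a q + l y with one
   coefficient l <> 0 for all y; rescaling gives x in Q with ad x the identity modulo Fx.
   Then L = E + Fx, where E is the 1-eigenspace of ad x, and [E, E] <= {c x | 2c = 0}.
   If E is abelian, L is almost abelian.  Otherwise char F = 2, E has a basis n, m with
   [n, m] = x, the coordinates (a, b, c) |-> a n + b m + c x give an isomorphism K -> L,
   and Q = Fx because no non-zero element of E is a quasi-line element.
   The argument never uses that L is finite-dimensional. *)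

locale lie_alg = vector_space scl for scl :: "'f::field \<Rightarrow> 'v::ab_group_add \<Rightarrow> 'v" (infixr \<open>*s\<close> 75) +
  fixes br :: "'v \<Rightarrow> 'v \<Rightarrow> 'v"
  assumes lie: "lie_algebra scl br"
begin

lemma br_addL: "br (x + y) z = br x z + br y z" using lie by (simp add: lie_algebra_def)
lemma br_addR: "br x (y + z) = br x y + br x z" using lie by (simp add: lie_algebra_def)
lemma br_sclL: "br (r *s x) y = r *s br x y" using lie by (simp add: lie_algebra_def)
lemma br_sclR: "br x (r *s y) = r *s br x y" using lie by (simp add: lie_algebra_def)
lemma br_self [simp]: "br x x = 0" using lie by (simp add: lie_algebra_def)
lemma jacobi: "br x (br y z) + br y (br z x) + br z (br x y) = 0" using lie by (simp add: lie_algebra_def)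

lemma br_0L [simp]: "br 0 y = 0" using br_addL[of 0 0 y] by simp
lemma br_0R [simp]: "br y 0 = 0" using br_addR[of y 0 0] by simp

lemma br_anti: "br y x = - br x y"
proof -
  have "br x x + br y x + (br x y + br y y) = 0"
    using br_self[of "x + y"] by (simp only: br_addL br_addR)
  hence "br x y + br y x = 0" by (simp add: add.commute)
  thus ?thesis by (rule sym[OF minus_unique])
qed

lemma br_negL: "br (- x) y = - br x y"
  using br_addL[of x "- x" y] by (metis add.right_inverse br_0L minus_unique)

lemma br_negR: "br y (- x) = - br y x"
  using br_addR[of y x "- x"] by (metis add.right_inverse br_0R minus_unique)

lemma br_diffL: "br (x - y) z = br x z - br y z" by (simp only: diff_conv_add_uminus br_addL br_negL)
lemma br_diffR: "br z (x - y) = br z x - br z y" by (simp only: diff_conv_add_uminus br_addR br_negR)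

lemmas brs = br_addL br_addR br_sclL br_sclR br_diffL br_diffR br_negL br_negR


lemma gen_subalgebra: "subalgebra scl br (gen scl br S)"
  unfolding subalgebra_def gen_def subspace_def by auto

lemma gen_superset: "S \<subseteq> gen scl br S" unfolding gen_def by auto

lemma gen_of_subalgebra: "subalgebra scl br U \<Longrightarrow> gen scl br U = U"
  unfolding gen_def by auto

lemma subalgebra_line: "subalgebra scl br (span {v})"
proof -
  have "br a b \<in> span {v}" if "a \<in> span {v}" "b \<in> span {v}" for a b
    using that by (auto simp: span_singleton brs)
  thus ?thesis unfolding subalgebra_def by simp
qed

lemma scale_in_subspace_imp_zero:
  assumes Q: "subspace Q" and z: "z \<notin> Q" and cz: "c *s z \<in> Q"
  shows "c = 0"
proof (rule ccontr)
  assume "c \<noteq> 0"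
  hence "z = inverse c *s (c *s z)" by simp
  also have "\<dots> \<in> Q" using Q cz by (rule subspace_scale)
  finally show False using z by simp
qed

lemma subspace_setsum:
  assumes A: "subspace A" and B: "subspace B" shows "subspace (setsum A B)"
proof (rule subspaceI)
  show "0 \<in> setsum A B"
    using A B subspace_0 unfolding setsum_def by force
next
  fix u v assume "u \<in> setsum A B" "v \<in> setsum A B"
  then obtain a1 b1 a2 b2 where "u = a1 + b1" "v = a2 + b2" "a1 \<in> A" "a2 \<in> A" "b1 \<in> B" "b2 \<in> B"
    unfolding setsum_def by blast
  moreover have "a1 + b1 + (a2 + b2) = (a1 + a2) + (b1 + b2)" by (simp add: algebra_simps)
  ultimately show "u + v \<in> setsum A B"
    using A B subspace_add unfolding setsum_def by blast
next
  fix c u assume "u \<in> setsum A B"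
  then obtain a b where "u = a + b" "a \<in> A" "b \<in> B" unfolding setsum_def by blast
  moreover have "c *s (a + b) = c *s a + c *s b" by (rule scale_right_distrib)
  ultimately show "c *s u \<in> setsum A B"
    using A B subspace_scale unfolding setsum_def by blast
qed

lemma dim_one_line:
  assumes S: "subspace S" and d: "dim S = 1"
  obtains v where "S = span {v}"
proof -
  obtain B where B: "B \<subseteq> S" "independent B" "S \<subseteq> span B" "card B = dim S" by (rule basis_exists)
  then obtain v where "B = {v}" using d by (metis card_1_singletonE)
  with B S span_minimal[of B S] have "S = span {v}" by auto
  thus ?thesis by (rule that)
qed


subsection \<open>Quasi-line elements\<close>

definition quasi_line :: "'v \<Rightarrow> bool" where
  "quasi_line x \<longleftrightarrow> (\<forall>y. \<exists>s t. br x y = s *s x + t *s y)"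

lemma quasi_ideal_line:
  assumes "quasi_line v" shows "quasi_ideal scl br (span {v})"
  unfolding quasi_ideal_def
proof (intro conjI subalgebra_line allI impI)
  fix V assume V: "subspace V"
  show "brset scl br (span {v}) V \<subseteq> setsum (span {v}) V"
    unfolding brset_def
  proof (rule span_minimal[OF _ subspace_setsum[OF subspace_span V]], clarify)
    fix a w assume a: "a \<in> span {v}" and w: "w \<in> V"
    obtain k where k: "a = k *s v" using a by (auto simp: span_singleton)
    obtain s t where st: "br v w = s *s v + t *s w" using assms quasi_line_def by blast
    have "br a w = (k * s) *s v + (k * t) *s w" using k st by (simp add: brs scale_right_distrib)
    moreover have "(k * s) *s v \<in> span {v}" by (simp add: span_base span_scale)
    moreover have "(k * t) *s w \<in> V" using w V by (rule subspace_scale[rotated])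
    ultimately show "br a w \<in> setsum (span {v}) V" by (auto simp: setsum_def)
  qed
qed

lemma lie_ideal_line:
  assumes "\<forall>y. br v y \<in> span {v}" shows "lie_ideal scl br (span {v})"
  unfolding lie_ideal_def brset_def
proof (intro conjI subalgebra_line span_minimal subspace_span, clarify)
  fix a w assume "a \<in> span {v}"
  then obtain k where "a = k *s v" by (auto simp: span_singleton)
  thus "br a w \<in> span {v}" using assms by (simp add: brs span_scale)
qed

text \<open>The one-dimensional subalgebras contained in \<open>Q\<close> are exactly the lines through
  its non-zero elements, so the strong (quasi-)ideal properties reduce to elements.\<close>
lemma strong_quasi_idealI:
  assumes "subalgebra scl br Q" and "\<forall>q\<in>Q. quasi_line q"
  shows "strong_quasi_ideal scl br Q"
  unfolding strong_quasi_ideal_def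
proof (intro conjI assms(1) allI impI, elim conjE)
  fix S assume "subalgebra scl br S" "S \<subseteq> Q" "dim S = 1"
  then obtain v where "S = span {v}" "v \<in> Q"
    by (metis dim_one_line subalgebra_def span_base singletonI subsetD)
  thus "quasi_ideal scl br S" using assms(2) quasi_ideal_line by blast
qed

lemma strong_idealI:
  assumes "subalgebra scl br Q" and "\<forall>q\<in>Q. \<forall>y. br q y \<in> span {q}"
  shows "strong_ideal scl br Q"
  unfolding strong_ideal_def
proof (intro conjI assms(1) allI impI, elim conjE)
  fix S assume "subalgebra scl br S" "S \<subseteq> Q" "dim S = 1"
  then obtain v where "S = span {v}" "v \<in> Q"
    by (metis dim_one_line subalgebra_def span_base singletonI subsetD)
  thus "lie_ideal scl br S" using assms(2) lie_ideal_line by blast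
qed


subsection \<open>Elements of a modular* quasi-ideal are quasi-line elements\<close>

lemma quasi_ideal_bracket:
  assumes qi: "quasi_ideal scl br Q" and q: "q \<in> Q"
  obtains q' k where "q' \<in> Q" "br q y = q' + k *s y"
proof -
  have "br q y \<in> brset scl br Q (span {y})"
    unfolding brset_def using q by (blast intro: span_base)
  also have "\<dots> \<subseteq> setsum Q (span {y})" using qi by (simp add: quasi_ideal_def)
  finally show ?thesis using that by (auto simp: setsum_def span_singleton)
qed

text \<open>The second modular* law with \<open>B = Fy\<close>, \<open>C = Fq\<close>: for \<open>y \<notin> Q\<close> we have
  \<open>Q \<inter> Fy = 0\<close>, hence \<open>\<langle>y, q\<rangle> \<inter> Q = Fq\<close>.\<close>
lemma modular_star_line:
  assumes ms: "modular_star scl br Q" and Q: "subspace Q" and q: "q \<in> Q" and y: "y \<notin> Q"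
  shows "gen scl br (span {y} \<union> span {q}) \<inter> Q = span {q}"
proof -
  have law: "\<forall>B C. subalgebra scl br B \<and> subalgebra scl br C \<and> C \<subseteq> Q \<longrightarrow>
      gen scl br (Q \<inter> B \<union> C) = gen scl br (B \<union> C) \<inter> Q"
    using ms by (simp add: modular_star_def)
  have "span {q} \<subseteq> Q" using Q q by (simp add: span_minimal)
  hence "gen scl br (Q \<inter> span {y} \<union> span {q}) = gen scl br (span {y} \<union> span {q}) \<inter> Q"
    using law subalgebra_line by blast
  moreover have "Q \<inter> span {y} \<subseteq> {0}"
    using scale_in_subspace_imp_zero[OF Q y] by (force simp: span_singleton)
  hence "Q \<inter> span {y} \<union> span {q} = span {q}" using span_zero by blast
  ultimately show ?thesis using gen_of_subalgebra[OF subalgebra_line] by simp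
qed

text \<open>For \<open>y \<notin> Q\<close>: \<open>[q, y] = q' + k y\<close> with \<open>q' \<in> \<langle>y, q\<rangle> \<inter> Q = Fq\<close>.\<close>
lemma modular_star_bracket_outside:
  assumes qi: "quasi_ideal scl br Q" and ms: "modular_star scl br Q"
    and q: "q \<in> Q" and y: "y \<notin> Q"
  shows "\<exists>s t. br q y = s *s q + t *s y"
proof -
  have Q: "subspace Q" using qi by (simp add: quasi_ideal_def subalgebra_def)
  obtain q' k where q': "q' \<in> Q" and e: "br q y = q' + k *s y"
    using quasi_ideal_bracket[OF qi q] .
  let ?G = "gen scl br (span {y} \<union> span {q})"
  have G: "subalgebra scl br ?G" by (rule gen_subalgebra)
  have "span {y} \<union> span {q} \<subseteq> ?G" by (rule gen_superset)
  hence "y \<in> ?G" "q \<in> ?G" using span_base[of y "{y}"] span_base[of q "{q}"] by auto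
  hence "br q y - k *s y \<in> ?G"
    using G by (simp add: subalgebra_def subspace_diff subspace_scale)
  moreover have "q' = br q y - k *s y" using e by simp
  ultimately have "q' \<in> ?G \<inter> Q" using q' by simp
  hence "q' \<in> span {q}" using modular_star_line[OF ms Q q y] by simp
  then obtain s where "q' = s *s q" by (auto simp: span_singleton)
  with e show ?thesis by blast
qed

text \<open>Every element of a proper modular* quasi-ideal is a quasi-line element; for
  \<open>y \<in> Q\<close> compare the brackets with \<open>z\<close> and \<open>y + z\<close> for some \<open>z \<notin> Q\<close>.\<close>
lemma modular_star_quasi_line:
  assumes qi: "quasi_ideal scl br Q" and ms: "modular_star scl br Q" and nU: "Q \<noteq> UNIV"
    and q: "q \<in> Q"
  shows "quasi_line q"
  unfolding quasi_line_def
proof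
  fix y
  have sQ: "subalgebra scl br Q" using qi by (simp add: quasi_ideal_def)
  hence Q: "subspace Q" by (simp add: subalgebra_def)
  show "\<exists>s t. br q y = s *s q + t *s y"
  proof (cases "y \<in> Q")
    case False thus ?thesis using modular_star_bracket_outside[OF qi ms q] by blast
  next
    case True
    obtain z where z: "z \<notin> Q" using nU by blast
    have yz: "y + z \<notin> Q"
      using z subspace_diff[OF Q _ True, of "y + z"] by auto
    obtain a b where ab: "br q z = a *s q + b *s z"
      using modular_star_bracket_outside[OF qi ms q z] by blast
    obtain c d where cd: "br q (y + z) = c *s q + d *s (y + z)"
      using modular_star_bracket_outside[OF qi ms q yz] by blast
    have e: "br q y = (c - a) *s q + d *s y + (d - b) *s z"
      using ab cd by (simp add: brs algebra_simps)
    have "br q y - ((c - a) *s q + d *s y) \<in> Q"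
      using sQ q True by (simp add: subalgebra_def subspace_diff subspace_add subspace_scale)
    hence "(d - b) *s z \<in> Q" using e by (simp add: algebra_simps)
    hence "d - b = 0" by (rule scale_in_subspace_imp_zero[OF Q z])
    with e show ?thesis by auto
  qed
qed


subsection \<open>Elements acting as the identity modulo their own line\<close>

text \<open>If \<open>[x, y] \<notin> Fx\<close> for some \<open>y\<close>, the coefficient of \<open>y\<close> in \<open>[x, y]\<close> is a
  non-zero constant: compare \<open>[x, y]\<close>, \<open>[x, y\<^sub>0]\<close> and \<open>[x, y + y\<^sub>0]\<close>.\<close>
lemma uniform_coefficient:
  assumes ql: "quasi_line x" and y0: "br x y0 \<notin> span {x}"
  shows "\<exists>l. l \<noteq> 0 \<and> (\<forall>y. \<exists>a. br x y = a *s x + l *s y)"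
proof -
  obtain a0 l where e0: "br x y0 = a0 *s x + l *s y0" using ql quasi_line_def by blast
  have y0x: "y0 \<notin> span {x}"
  proof
    assume "y0 \<in> span {x}"
    then obtain c where "y0 = c *s x" by (auto simp: span_singleton)
    hence "br x y0 = 0" by (simp add: brs)
    with y0 show False by (simp add: span_zero)
  qed
  have l0: "l \<noteq> 0" using e0 y0 by (auto simp: span_base span_scale)
  have "\<exists>a. br x y = a *s x + l *s y" for y
  proof -
    obtain a1 l1 where e1: "br x y = a1 *s x + l1 *s y" using ql quasi_line_def by blast
    obtain a2 l2 where e2: "br x (y + y0) = a2 *s x + l2 *s (y + y0)" using ql quasi_line_def by blast
    have E: "(l2 - l1) *s y + (l2 - l) *s y0 = (a1 + a0 - a2) *s x"
      using e0 e1 e2 by (simp add: brs algebra_simps)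
    show ?thesis
    proof (cases "l2 = l1")
      case True
      hence "(l2 - l) *s y0 \<in> span {x}" using E by (simp add: span_base span_scale)
      hence "l2 - l = 0" by (rule scale_in_subspace_imp_zero[OF subspace_span y0x])
      with True e1 show ?thesis by auto
    next
      case False
      define s where "s = inverse (l2 - l1) * (a1 + a0 - a2)"
      define t where "t = - inverse (l2 - l1) * (l2 - l)"
      have "inverse (l2 - l1) *s ((l2 - l1) *s y + (l2 - l) *s y0) = s *s x"
        using E by (simp add: s_def)
      hence "y + (inverse (l2 - l1) * (l2 - l)) *s y0 = s *s x"
        using False by (simp add: scale_right_distrib)
      hence "y = s *s x + t *s y0" by (simp add: t_def algebra_simps)
      hence "br x y = (t * a0 - l * s) *s x + l *s y"
        using e0 by (simp add: brs algebra_simps)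
      thus ?thesis by blast
    qed
  qed
  with l0 show ?thesis by blast
qed

definition ad_identity_mod :: "'v \<Rightarrow> bool" where
  "ad_identity_mod x \<longleftrightarrow> (\<forall>y. \<exists>a. br x y = a *s x + y)"

lemma ad_identity_element:
  assumes Q: "subspace Q" and xQ: "x \<in> Q" and ql: "quasi_line x" and y0: "br x y0 \<notin> span {x}"
  obtains u where "u \<in> Q" "u \<noteq> 0" "ad_identity_mod u"
proof -
  obtain l where l: "l \<noteq> 0" "\<forall>y. \<exists>a. br x y = a *s x + l *s y"
    using uniform_coefficient[OF ql y0] by blast
  define u where "u = inverse l *s x"
  have "\<exists>a. br u y = a *s u + y" for y
  proof -
    obtain a where "br x y = a *s x + l *s y" using l by blast
    hence "br u y = a *s u + y" using l(1) by (simp add: u_def brs scale_right_distrib mult.commute)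
    thus ?thesis by blast
  qed
  moreover have "x \<noteq> 0" using y0 by (auto simp: span_zero)
  ultimately show ?thesis using that[of u] xQ Q l(1) by (simp add: u_def ad_identity_mod_def subspace_scale)
qed


subsection \<open>The eigenspace decomposition\<close>

definition eigen1 :: "'v \<Rightarrow> 'v set" where
  "eigen1 x = {n. br x n = n}"

lemma subspace_eigen1: "subspace (eigen1 x)"
  unfolding eigen1_def subspace_def by (auto simp: brs)

lemma eigen1_line: "k *s x \<in> eigen1 x \<Longrightarrow> k *s x = 0"
  by (simp add: eigen1_def brs)

lemma eigen1_decomp:
  assumes "ad_identity_mod x"
  shows "br x y \<in> eigen1 x" and "\<exists>a. y = br x y - a *s x"
proof -
  obtain a where e: "br x y = a *s x + y" using assms ad_identity_mod_def by blast
  thus "br x y \<in> eigen1 x" by (simp add: eigen1_def brs)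
  show "\<exists>a. y = br x y - a *s x" using e by (intro exI[of _ a]) simp
qed

text \<open>By the Jacobi identity \<open>[x, [n, m]] = 2 [n, m]\<close>, which forces \<open>[n, m] = c x\<close>
  with \<open>2 c = 0\<close>.\<close>
lemma eigen1_bracket:
  assumes x0: "x \<noteq> 0" and adx: "ad_identity_mod x" and n: "n \<in> eigen1 x" and m: "m \<in> eigen1 x"
  shows "\<exists>c. br n m = c *s x \<and> c + c = 0"
proof -
  have bn: "br x n = n" and bm: "br x m = m" using n m by (auto simp: eigen1_def)
  have "br x (br n m) + br n (br m x) + br m (br x n) = 0" by (rule jacobi)
  moreover have "br n (br m x) = - br n m" using bm br_anti[of m x] by (simp add: br_negR)
  moreover have "br m (br x n) = - br n m" using bn br_anti[of n m] by simp
  ultimately have twice: "br x (br n m) = br n m + br n m"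
    by (simp add: algebra_simps eq_neg_iff_add_eq_0)
  obtain c where "br x (br n m) = c *s x + br n m" using adx ad_identity_mod_def by blast
  hence nm: "br n m = c *s x" using twice by simp
  hence "c *s x + c *s x = 0" using twice by (simp add: brs)
  hence "(c + c) *s x = 0" by (simp only: scale_left_distrib)
  hence "c + c = 0" using x0 by (metis scale_eq_0_iff)
  with nm show ?thesis by blast
qed

lemma eigen1_complement:
  assumes adx: "ad_identity_mod x"
  shows "eigen1 x \<inter> span {x} = {0}" and "setsum (eigen1 x) (span {x}) = UNIV"
proof -
  show "eigen1 x \<inter> span {x} = {0}"
    using eigen1_line subspace_eigen1 by (auto simp: span_singleton subspace_0)
  have "y \<in> setsum (eigen1 x) (span {x})" for y
  proof -
    obtain a where "y = br x y + (- a) *s x" using eigen1_decomp[OF adx] by force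
    thus ?thesis using eigen1_decomp(1)[OF adx] unfolding setsum_def
      by (blast intro: span_scale span_base)
  qed
  thus "setsum (eigen1 x) (span {x}) = UNIV" by blast
qed

text \<open>If the eigenspace is abelian, it is the derived algebra \<open>L\<^sup>2\<close>: writing
  \<open>u = [x, u] - a x\<close> and \<open>v = [x, v] - b x\<close> gives \<open>[u, v] = b [x, u] - a [x, v] \<in> E\<close>.\<close>
lemma derived_algebra_eq_eigen1:
  assumes adx: "ad_identity_mod x" and ab: "\<forall>n\<in>eigen1 x. \<forall>m\<in>eigen1 x. br n m = 0"
  shows "brset scl br UNIV UNIV = eigen1 x"
proof
  note dec = eigen1_decomp[OF adx]
  have "br u v \<in> eigen1 x" for u v
  proof -
    obtain a b where a: "u = br x u - a *s x" and b: "v = br x v - b *s x" using dec by blast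
    have nu: "br x u \<in> eigen1 x" and nv: "br x v \<in> eigen1 x" using dec by auto
    have "br u v = br (br x u - a *s x) (br x v - b *s x)" using a b by simp
    also have "\<dots> = b *s br x u - a *s br x v"
      using ab nu nv br_anti[of "br x u" x] by (simp add: brs eigen1_def)
    also have "\<dots> \<in> eigen1 x"
      using nu nv subspace_eigen1 by (simp add: subspace_diff subspace_scale)
    finally show ?thesis .
  qed
  thus "brset scl br UNIV UNIV \<subseteq> eigen1 x"
    unfolding brset_def by (intro span_minimal subspace_eigen1) blast
  have "eigen1 x \<subseteq> {br a b |a b. a \<in> UNIV \<and> b \<in> UNIV}"
  proof
    fix n assume "n \<in> eigen1 x"
    hence "n = br x n" by (simp add: eigen1_def)
    thus "n \<in> {br a b |a b. a \<in> UNIV \<and> b \<in> UNIV}" by blast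
  qed
  thus "eigen1 x \<subseteq> brset scl br UNIV UNIV"
    unfolding brset_def using span_superset by blast
qed

lemma almost_abelianI:
  assumes adx: "ad_identity_mod x" and ab: "\<forall>n\<in>eigen1 x. \<forall>m\<in>eigen1 x. br n m = 0"
  shows "almost_abelian scl br"
  unfolding almost_abelian_def Let_def derived_algebra_eq_eigen1[OF adx ab]
  using ab eigen1_complement[OF adx] by (auto simp: eigen1_def)


subsection \<open>The exceptional case in characteristic two\<close>

definition frame :: "'v \<Rightarrow> 'v \<Rightarrow> 'v \<Rightarrow> 'f \<times> 'f \<times> 'f \<Rightarrow> 'v" where
  "frame u v w = (\<lambda>(a, b, c). a *s u + b *s v + c *s w)"

lemma frame_apply [simp]: "frame u v w (a, b, c) = a *s u + b *s v + c *s w"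
  by (simp add: frame_def)

context
  fixes x n m :: 'v
  assumes two: "(2::'f) = 0" and x0: "x \<noteq> 0" and adx: "ad_identity_mod x"
    and n: "n \<in> eigen1 x" and m: "m \<in> eigen1 x" and nm: "br n m = x"
begin

lemma char2_neg: "- v = (v::'v)"
proof -
  have "v + v = (2::'f) *s v" by (metis one_add_one scale_left_distrib scale_one)
  thus ?thesis using two by (metis minus_unique scale_zero_left)
qed

lemma char2_diff: "a - b = a + (b::'f)"
proof -
  have "b + b = 0" using two by (metis mult_2 mult_zero_left)
  hence "- b = b" by (metis minus_unique)
  thus ?thesis by (metis diff_conv_add_uminus)
qed

text \<open>The multiplication table of \<open>K\<close> for \<open>n \<mapsto> a\<close>, \<open>m \<mapsto> b\<close>, \<open>x \<mapsto> c\<close>.\<close>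
lemma bracket_table:
  "br x n = n" "br x m = m" "br n x = n" "br m x = m" "br n m = x" "br m n = x"
  using n m nm br_anti[of x n] br_anti[of x m] br_anti[of n m]
  by (simp_all add: eigen1_def char2_neg)

text \<open>\<open>n, m\<close> span the eigenspace: Jacobi for \<open>n, m, p\<close> gives \<open>p = c\<^sub>1 n + c\<^sub>2 m\<close>.\<close>
lemma eigen1_span:
  assumes p: "p \<in> eigen1 x" shows "\<exists>s t. p = s *s n + t *s m"
proof -
  obtain c1 where c1: "br m p = c1 *s x" using eigen1_bracket[OF x0 adx m p] by blast
  obtain c2 where c2: "br p n = c2 *s x" using eigen1_bracket[OF x0 adx p n] by blast
  have px: "br p x = p" using p br_anti[of x p] by (simp add: eigen1_def char2_neg)
  have "br n (br m p) + br m (br p n) + br p (br n m) = 0" by (rule jacobi)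
  hence "c1 *s n + c2 *s m + p = 0" unfolding c1 c2 nm by (simp add: brs bracket_table px)
  hence "p = c1 *s n + c2 *s m" by (metis add.commute eq_neg_iff_add_eq_0 char2_neg)
  thus ?thesis by blast
qed

lemma frame_independent:
  assumes "a *s n + b *s m + c *s x = 0" shows "a = 0 \<and> b = 0 \<and> c = 0"
proof -
  have nm0: "a *s n + b *s m = 0"
    using arg_cong[OF assms, of "br x"] by (simp add: brs bracket_table)
  hence "c = 0" using assms x0 by simp
  moreover have "b = 0" using arg_cong[OF nm0, of "br n"] x0 by (simp add: brs bracket_table)
  moreover have "a = 0" using arg_cong[OF nm0, of "br m"] x0 by (simp add: brs bracket_table)
  ultimately show ?thesis by simp
qed

lemma bij_frame: "bij (frame n m x)"
proof (rule bijI)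
  show "inj (frame n m x)"
  proof (rule injI)
    fix p q :: "'f \<times> 'f \<times> 'f" assume e: "frame n m x p = frame n m x q"
    obtain a b c a' b' c' where pq: "p = (a, b, c)" "q = (a', b', c')" by (cases p, cases q) auto
    have "(a - a') *s n + (b - b') *s m + (c - c') *s x = frame n m x p - frame n m x q"
      by (simp add: pq algebra_simps)
    hence "(a - a') *s n + (b - b') *s m + (c - c') *s x = 0" using e by simp
    from frame_independent[OF this] show "p = q" by (simp add: pq)
  qed
  have "y \<in> range (frame n m x)" for y
  proof -
    obtain a where a: "y = br x y - a *s x" using eigen1_decomp[OF adx] by blast
    obtain s t where "br x y = s *s n + t *s m" using eigen1_span eigen1_decomp(1)[OF adx] by blast
    hence "frame n m x (s, t, - a) = y" using a by simp
    thus ?thesis by (metis rangeI)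
  qed
  thus "surj (frame n m x)" by blast
qed

lemma vector_space_K: "vector_space (K_scale :: 'f \<Rightarrow> 'f \<times> 'f \<times> 'f \<Rightarrow> 'f \<times> 'f \<times> 'f)"
  unfolding vector_space_def K_scale_def by (auto simp: algebra_simps split: prod.split)

lemma linear_frame: "Vector_Spaces.linear K_scale scl (frame n m x)"
  unfolding linear_iff
proof (intro conjI allI vector_space_K)
  show "vector_space scl" by (simp add: vector_space_def vector_space_assms)
  show "frame n m x (p + q) = frame n m x p + frame n m x q" for p q
    by (cases p, cases q) (simp add: algebra_simps)
  show "frame n m x (K_scale c p) = c *s frame n m x p" for c p
    by (cases p) (simp add: K_scale_def algebra_simps)
qed

lemma frame_bracket: "frame n m x (K_br p q) = br (frame n m x p) (frame n m x q)"
proof -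
  obtain a b c a' b' c' where pq: "p = (a, b, c)" "q = (a', b', c')" by (cases p, cases q) auto
  have "frame n m x (K_br p q) = (a * c' + c * a') *s n + (b * c' + c * b') *s m + (a * b' + b * a') *s x"
    by (simp add: pq K_br_def char2_diff)
  also have "\<dots> = br (frame n m x p) (frame n m x q)"
    by (simp add: pq brs bracket_table scale_left_distrib algebra_simps)
  finally show ?thesis .
qed

lemma frame_line: "frame n m x ` {(0, 0, t) | t. True} = span {x}"
proof -
  have line: "{(0, 0, t) | t. True} = (\<lambda>t. (0::'f, 0::'f, t)) ` UNIV" by auto
  show ?thesis unfolding line image_image by (simp add: span_singleton)
qed

text \<open>A non-zero element of \<open>E\<close> is never a quasi-line element: for \<open>p = s n + t m\<close> the
  brackets \<open>[p, n] = t x\<close> and \<open>[p, m] = s x\<close> would lie in \<open>E \<inter> Fx = 0\<close>.\<close>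
lemma eigen1_quasi_line_zero:
  assumes p: "p \<in> eigen1 x" and ql: "quasi_line p" shows "p = 0"
proof -
  obtain s t where pst: "p = s *s n + t *s m" using eigen1_span[OF p] by blast
  have "br p v \<in> eigen1 x" if v: "v \<in> eigen1 x" for v
  proof -
    obtain a b where "br p v = a *s p + b *s v" using ql quasi_line_def by blast
    thus ?thesis using p v subspace_eigen1 by (simp add: subspace_add subspace_scale)
  qed
  moreover have "br p n = t *s x" "br p m = s *s x" by (simp_all add: pst brs bracket_table)
  ultimately have "t *s x \<in> eigen1 x" "s *s x \<in> eigen1 x" using n m by metis+
  hence "t = 0" "s = 0" using eigen1_line x0 by auto
  thus ?thesis using pst by simp
qed

text \<open>Hence a subspace of quasi-line elements containing \<open>x\<close> is the line \<open>Fx\<close>: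
  for \<open>q \<in> Q\<close>, \<open>[x, q] = q + a x\<close> lies in \<open>E \<inter> Q\<close> and so vanishes.\<close>
lemma quasi_line_subspace_eq_line:
  assumes Q: "subspace Q" and xQ: "x \<in> Q" and lines: "\<forall>q\<in>Q. quasi_line q"
  shows "Q = span {x}"
proof
  show "Q \<subseteq> span {x}"
  proof
    fix q assume q: "q \<in> Q"
    obtain a where a: "q = br x q - a *s x" using eigen1_decomp[OF adx] by blast
    have "br x q = q + a *s x" using a by (simp add: algebra_simps)
    hence "br x q \<in> Q" using Q q xQ by (simp add: subspace_add subspace_scale)
    hence "br x q = 0" using lines eigen1_quasi_line_zero eigen1_decomp(1)[OF adx] by blast
    hence "q = (- a) *s x" using a by simp
    thus "q \<in> span {x}" using span_scale[OF span_base[of x "{x}"], of "- a"] by simp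
  qed
  show "span {x} \<subseteq> Q" using Q xQ by (simp add: span_minimal)
qed

end

lemma lie_iso_inv:
  assumes bij: "bij \<psi>" and lin: "Vector_Spaces.linear scl' scl \<psi>"
    and hom: "\<And>p q. \<psi> (br' p q) = br (\<psi> p) (\<psi> q)"
  shows "lie_iso scl br scl' br' (inv \<psi>)"
proof -
  have fi: "inv \<psi> (\<psi> p) = p" for p using bij by (simp add: bij_is_inj)
  have if': "\<psi> (inv \<psi> y) = y" for y using bij by (simp add: bij_is_surj surj_f_inv_f)
  have "inv \<psi> (u + v) = inv \<psi> u + inv \<psi> v" for u v
    using fi[of "inv \<psi> u + inv \<psi> v"] lin by (simp add: linear_iff if')
  moreover have "inv \<psi> (c *s u) = scl' c (inv \<psi> u)" for c u
    using fi[of "scl' c (inv \<psi> u)"] lin by (simp add: linear_iff if')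
  moreover have "inv \<psi> (br u v) = br' (inv \<psi> u) (inv \<psi> v)" for u v
    using fi[of "br' (inv \<psi> u) (inv \<psi> v)"] by (simp add: hom if')
  ultimately show ?thesis
    using bij lin unfolding lie_iso_def linear_iff by (simp add: bij_imp_bij_inv)
qed

lemma ad_identity_case:
  assumes Q: "subspace Q" and lines: "\<forall>q\<in>Q. quasi_line q"
    and xQ: "x \<in> Q" and x0: "x \<noteq> 0" and adx: "ad_identity_mod x"
  shows "almost_abelian scl br \<or>
    ((2::'f) = 0 \<and> (\<exists>\<phi>. lie_iso scl br K_scale K_br \<phi> \<and> \<phi> ` Q = {(0, 0, t) | t. True}))"
proof (cases "\<forall>n\<in>eigen1 x. \<forall>m\<in>eigen1 x. br n m = 0")
  case True thus ?thesis using almost_abelianI[OF adx] by blast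
next
  case False
  then obtain n m where n: "n \<in> eigen1 x" and m: "m \<in> eigen1 x" and nz: "br n m \<noteq> 0"
    by blast
  obtain c where nm: "br n m = c *s x" and cc: "c + c = 0"
    using eigen1_bracket[OF x0 adx n m] by blast
  have c0: "c \<noteq> 0" using nm nz by auto
  have "2 * c = 0" using cc by (metis mult_2)
  hence two: "(2::'f) = 0" using c0 by (metis mult_eq_0_iff)
  define m' where "m' = inverse c *s m"
  have m': "m' \<in> eigen1 x" using m subspace_eigen1 by (simp add: m'_def subspace_scale)
  have nm': "br n m' = x" using nm c0 by (simp add: m'_def brs)
  note model = two x0 adx n m' nm'
  have "Q = frame n m' x ` {(0, 0, t) | t. True}"
    using quasi_line_subspace_eq_line[OF model Q xQ lines] frame_line[OF model] by simp
  hence "inv (frame n m' x) ` Q = {(0, 0, t) | t. True}"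
    using bij_frame[OF model] by (simp add: image_inv_f_f bij_is_inj)
  moreover have "lie_iso scl br K_scale K_br (inv (frame n m' x))"
    by (rule lie_iso_inv[OF bij_frame[OF model] linear_frame[OF model] frame_bracket[OF model]])
  ultimately show ?thesis using two by blast
qed

end


theorem proposition3p2:
  fixes scl :: "'f::field \<Rightarrow> 'v::ab_group_add \<Rightarrow> 'v"
    and br :: "'v \<Rightarrow> 'v \<Rightarrow> 'v"
    and Q :: "'v set"
  assumes "lie_algebra scl br"
    and "fin_dim scl"
    and "quasi_ideal scl br Q"
    and "Q \<noteq> UNIV"
    and "modular_star scl br Q"
  shows "strong_quasi_ideal scl br Q \<and>
    (strong_ideal scl br Q \<or> almost_abelian scl br \<or>
     ((2::'f) = 0 \<and> (\<exists>\<phi>. lie_iso scl br K_scale K_br \<phi> \<and> \<phi> ` Q = {(0, 0, t) | t. True})))"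
proof -
  interpret L: lie_alg scl br
    using assms(1) by (simp add: lie_alg_def lie_alg_axioms_def lie_algebra_def)
  have sQ: "subalgebra scl br Q" using assms(3) by (simp add: quasi_ideal_def)
  hence Q: "L.subspace Q" by (simp add: subalgebra_def)
  have lines: "\<forall>q\<in>Q. L.quasi_line q"
    using L.modular_star_quasi_line[OF assms(3) assms(5) assms(4)] by blast
  have "strong_ideal scl br Q \<or> almost_abelian scl br \<or>
     ((2::'f) = 0 \<and> (\<exists>\<phi>. lie_iso scl br K_scale K_br \<phi> \<and> \<phi> ` Q = {(0, 0, t) | t. True}))"
  proof (cases "\<forall>q\<in>Q. \<forall>y. br q y \<in> L.span {q}")
    case True thus ?thesis using L.strong_idealI[OF sQ] by blast
  next
    case False
    then obtain q y where "q \<in> Q" "br q y \<notin> L.span {q}" by blast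
    then obtain x where "x \<in> Q" "x \<noteq> 0" "L.ad_identity_mod x"
      using L.ad_identity_element[OF Q] lines by metis
    thus ?thesis using L.ad_identity_case[OF Q lines] by blast
  qed
  thus ?thesis using L.strong_quasi_idealI[OF sQ lines] by blast
qed

end
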